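(* Let $(\alpha,\beta)$ be an admissible, non-null pair and assume there is no $x\in(0,1)$ with $\pi_x(\alpha)=\pi_x(\beta)$. Let $a\in(1,2]$ and let $p\in[1-1/a,1/a]$ be such that $f_{(a,p,+)}(\pi_{1/a}(\omega))=\pi_{1/a}(S\omega)$ for all $\omega\in\Omega_{(\alpha,\beta,+)}$. Then $\Omega_{(\alpha,\beta,+)}\subseteq\Omega_{(a,p,+)}$, where $\Omega_{(a,p,+)}=\tau_{(a,p,+)}([0,1])$.
   Context: For $1<a\le2$, $1-\frac1a\le p\le\frac1a$: $f_{(a,p,+)}(x)=ax$ if $x<p$ and $ax+(1-a)$ if $x\ge p$, on $[0,1]$. $\Omega=\{0,1\}^\infty$ (infinite binary strings $\omega_0\omega_1\cdots$). With $I_0=[0,p)$, $I_1=[p,1]$, the itinerary $\tau_{(a,p,+)}(x)=\omega$ has $\omega_n=0$ if $f_{(a,p,+)}^n(x)\in I_0$ and $\omega_n=1$ if $f_{(a,p,+)}^n(x)\in I_1$. $S$ is the left shift, $\preceq$ the lexicographic order with intervals $[\alpha,\beta]=\{\omega:\alpha\preceq\omega\preceq\beta\}$ and half-open analogues. $(\alpha,\beta)$ is admissible if $\alpha_0=0,\alpha_1=1,\beta_0=1,\beta_1=0$ and $S^n\alpha\notin(\alpha,\beta]$, $S^n\beta\notin[\alpha,\beta)$ for all $n\ge0$. $\Omega_{(\alpha,\beta,-)}=\{\omega:S^n\omega\notin(\alpha,\beta]\ \forall n\ge0\}$, $\Omega_{(\alpha,\beta,+)}=\{\omega:S^n\omega\notin[\alpha,\beta)\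 \forall n\ge0\}$, $\Omega_{(\alpha,\beta)}$ their union. With $\Gamma_n=\{\omega_0\cdots\omega_n:\omega\in\Gamma\}$, $h(\Gamma)=\limsup_n\frac1n\ln|\Gamma_n|$, the pair is non-null if $h(\Omega_{(\alpha,\beta)})>0$. Projection: $\pi_x(\omega)=(1-x)\sum_{k\ge0}\omega_kx^k$. *)

theory Defs
  imports "HOL-Analysis.Analysis"
begin

text \<open>Infinite binary strings: digit 0 is False, digit 1 is True.\<close>
type_synonym bits = "nat \<Rightarrow> bool"

definition shift :: "bits \<Rightarrow> bits" where
  "shift \<omega> = (\<lambda>n. \<omega> (Suc n))"

definition lex_less :: "bits \<Rightarrow> bits \<Rightarrow> bool" where
  "lex_less \<alpha> \<beta> \<longleftrightarrow> (\<exists>n. (\<forall>k<n. \<alpha> k = \<beta> k) \<and> \<not> \<alpha> n \<and> \<beta> n)"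

definition lex_le :: "bits \<Rightarrow> bits \<Rightarrow> bool" where
  "lex_le \<alpha> \<beta> \<longleftrightarrow> \<alpha> = \<beta> \<or> lex_less \<alpha> \<beta>"

definition admissible :: "bits \<Rightarrow> bits \<Rightarrow> bool" where
  "admissible \<alpha> \<beta> \<longleftrightarrow>
     \<not> \<alpha> 0 \<and> \<alpha> 1 \<and> \<beta> 0 \<and> \<not> \<beta> 1 \<and>
     (\<forall>n. \<not> (lex_less \<alpha> ((shift ^^ n) \<alpha>) \<and> lex_le ((shift ^^ n) \<alpha>) \<beta>)) \<and>
     (\<forall>n. \<not> (lex_le \<alpha> ((shift ^^ n) \<beta>) \<and> lex_less ((shift ^^ n) \<beta>) \<beta>))"

definition Omega_minus :: "bits \<Rightarrow> bits \<Rightarrow> bits set" where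
  "Omega_minus \<alpha> \<beta> = {\<omega>. \<forall>n. \<not> (lex_less \<alpha> ((shift ^^ n) \<omega>) \<and> lex_le ((shift ^^ n) \<omega>) \<beta>)}"

definition Omega_plus :: "bits \<Rightarrow> bits \<Rightarrow> bits set" where
  "Omega_plus \<alpha> \<beta> = {\<omega>. \<forall>n. \<not> (lex_le \<alpha> ((shift ^^ n) \<omega>) \<and> lex_less ((shift ^^ n) \<omega>) \<beta>)}"

definition Omega_ab :: "bits \<Rightarrow> bits \<Rightarrow> bits set" where
  "Omega_ab \<alpha> \<beta> = Omega_minus \<alpha> \<beta> \<union> Omega_plus \<alpha> \<beta>"

definition prefixes :: "bits set \<Rightarrow> nat \<Rightarrow> bool list set" where
  "prefixes \<Gamma> n = (\<lambda>\<omega>. map \<omega> [0..<Suc n]) ` \<Gamma>"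

definition entropy :: "bits set \<Rightarrow> ereal" where
  "entropy \<Gamma> = limsup (\<lambda>n. ereal (ln (real (card (prefixes \<Gamma> n))) / real n))"

definition non_null :: "bits \<Rightarrow> bits \<Rightarrow> bool" where
  "non_null \<alpha> \<beta> \<longleftrightarrow> entropy (Omega_ab \<alpha> \<beta>) > 0"

definition proj :: "real \<Rightarrow> bits \<Rightarrow> real" where
  "proj x \<omega> = (1 - x) * (\<Sum>k. of_bool (\<omega> k) * x ^ k)"

definition fplus :: "real \<Rightarrow> real \<Rightarrow> real \<Rightarrow> real" where
  "fplus a p x = (if x < p then a * x else a * x + (1 - a))"

definition itinerary :: "real \<Rightarrow> real \<Rightarrow> real \<Rightarrow> bits" where
  "itinerary a p x = (\<lambda>n. (fplus a p ^^ n) x \<in> {p..1})"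

definition Omega_ap :: "real \<Rightarrow> real \<Rightarrow> bits set" where
  "Omega_ap a p = itinerary a p ` {0..1}"

end

theory Submission
  imports Defs
begin

text \<open>With \<open>x = 1/a\<close> one has \<open>proj x (shift \<omega>) = a * proj x \<omega> + (1 - a) * \<omega> 0\<close>,
  so, as \<open>a \<noteq> 1\<close>, the conjugacy \<open>fplus a p (proj x \<omega>) = proj x (shift \<omega>)\<close> forces
  \<open>fplus\<close> to apply the branch of the first digit: \<open>\<omega> 0 \<longleftrightarrow> p \<le> proj x \<omega>\<close>.
  Since \<open>Omega_plus \<alpha> \<beta>\<close> is shift invariant, this holds along the whole orbit, so \<open>\<omega>\<close>
  is the itinerary of \<open>proj x \<omega> \<in> [0,1]\<close>.\<close>

lemma funpow_shift_apply: "(shift ^^ n) \<omega> k = \<omega> (k + n)"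
  by (induction n arbitrary: k) (simp_all add: shift_def)

lemma funpow_shift_in_Omega_plus:
  assumes "\<omega> \<in> Omega_plus \<alpha> \<beta>"
  shows "(shift ^^ m) \<omega> \<in> Omega_plus \<alpha> \<beta>"
proof -
  have "(shift ^^ n) ((shift ^^ m) \<omega>) = (shift ^^ (n + m)) \<omega>" for n
    by (simp add: funpow_add)
  then show ?thesis
    using assms unfolding Omega_plus_def by auto
qed

lemma summable_proj_series:
  assumes "0 < x" "x < 1"
  shows "summable (\<lambda>k. of_bool (\<omega> k) * x ^ k :: real)"
  by (rule summable_comparison_test[of _ "\<lambda>k. x ^ k"])
     (use assms in \<open>auto intro!: summable_geometric\<close>)

lemma proj_shift:
  assumes "0 < x" "x < 1"
  shows "proj x \<omega> = (1 - x) * of_bool (\<omega> 0) + x * proj x (shift \<omega>)"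
proof -
  let ?g = "\<lambda>k. of_bool (\<omega> k) * x ^ k :: real"
  have "suminf ?g = ?g 0 + (\<Sum>k. ?g (Suc k))"
    using suminf_split_head[OF summable_proj_series[OF assms]] by simp
  also have "(\<Sum>k. ?g (Suc k)) = (\<Sum>k. x * (of_bool (shift \<omega> k) * x ^ k))"
    by (simp add: shift_def mult_ac)
  also have "\<dots> = x * (\<Sum>k. of_bool (shift \<omega> k) * x ^ k)"
    using suminf_mult[OF summable_proj_series[OF assms]] by simp
  finally show ?thesis
    unfolding proj_def by (simp add: algebra_simps)
qed

lemma proj_in_unit_interval:
  assumes "0 < x" "x < 1"
  shows "proj x \<omega> \<in> {0..1}"
proof -
  let ?g = "\<lambda>k. of_bool (\<omega> k) * x ^ k :: real"
  have s: "summable ?g" using summable_proj_series assms .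
  have "0 \<le> suminf ?g"
    using assms by (intro suminf_nonneg[OF s]) auto
  moreover have "suminf ?g \<le> (\<Sum>k. x ^ k)"
    using assms by (intro suminf_le[OF _ s summable_geometric]) auto
  moreover have "(1 - x) * (\<Sum>k. x ^ k) = 1"
    using suminf_geometric[of x] assms by simp
  ultimately show ?thesis
    unfolding proj_def using assms by (auto intro: order_trans[OF mult_left_mono])
qed

lemma first_digit_iff_proj_ge:
  assumes "1 < a"
    and "fplus a p (proj (1 / a) \<omega>) = proj (1 / a) (shift \<omega>)"
  shows "\<omega> 0 \<longleftrightarrow> p \<le> proj (1 / a) \<omega>"
proof -
  have "proj (1 / a) (shift \<omega>) = a * proj (1 / a) \<omega> + (1 - a) * of_bool (\<omega> 0)"
    using proj_shift[of "1 / a" \<omega>] assms(1) by (simp add: field_simps)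
  with assms(2) have "(1 - a) * of_bool (p \<le> proj (1 / a) \<omega>) = (1 - a) * of_bool (\<omega> 0)"
    unfolding fplus_def by (auto split: if_splits)
  then show ?thesis
    using assms(1) by (auto split: if_splits)
qed

lemma itinerary_proj_eq:
  assumes "1 < a"
    and conj: "\<And>n. fplus a p (proj (1 / a) ((shift ^^ n) \<omega>)) = proj (1 / a) (shift ((shift ^^ n) \<omega>))"
  shows "itinerary a p (proj (1 / a) \<omega>) = \<omega>"
proof
  fix n
  have orbit: "(fplus a p ^^ n) (proj (1 / a) \<omega>) = proj (1 / a) ((shift ^^ n) \<omega>)"
    by (induction n) (simp_all add: conj)
  have "itinerary a p (proj (1 / a) \<omega>) n \<longleftrightarrow> proj (1 / a) ((shift ^^ n) \<omega>) \<in> {p..1}"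
    unfolding itinerary_def orbit ..
  also have "\<dots> \<longleftrightarrow> p \<le> proj (1 / a) ((shift ^^ n) \<omega>)"
    using proj_in_unit_interval[of "1 / a"] assms(1) by auto
  also have "\<dots> \<longleftrightarrow> (shift ^^ n) \<omega> 0"
    using first_digit_iff_proj_ge[OF assms(1) conj] by simp
  also have "\<dots> \<longleftrightarrow> \<omega> n"
    by (simp add: funpow_shift_apply)
  finally show "itinerary a p (proj (1 / a) \<omega>) n = \<omega> n" .
qed

theorem lemma3:
  fixes \<alpha> \<beta> :: bits and a p :: real
  assumes "admissible \<alpha> \<beta>"
    and "non_null \<alpha> \<beta>"
    and "\<not> (\<exists>x\<in>{0<..<1}. proj x \<alpha> = proj x \<beta>)"
    and "1 < a" and "a \<le> 2"
    and "1 - 1 / a \<le> p" and "p \<le> 1 / a"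
    and "\<forall>\<omega>\<in>Omega_plus \<alpha> \<beta>. fplus a p (proj (1 / a) \<omega>) = proj (1 / a) (shift \<omega>)"
  shows "Omega_plus \<alpha> \<beta> \<subseteq> Omega_ap a p"
proof
  fix \<omega> assume \<omega>: "\<omega> \<in> Omega_plus \<alpha> \<beta>"
  have "itinerary a p (proj (1 / a) \<omega>) = \<omega>"
    using \<open>1 < a\<close> assms(8) funpow_shift_in_Omega_plus[OF \<omega>] by (intro itinerary_proj_eq) auto
  moreover have "proj (1 / a) \<omega> \<in> {0..1}"
    using \<open>1 < a\<close> by (intro proj_in_unit_interval) auto
  ultimately show "\<omega> \<in> Omega_ap a p"
    unfolding Omega_ap_def by (metis image_eqI)
qed

end
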